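(* Let $n\geq 4$ and let $P$ be a convex $n$-gon with vertices labelled $0,1,\dots,n-1$ in cyclic order (indices taken modulo $n$). Let $a$ be a fixed vertex of $P$ and let $m$ be an integer with $0\leq m\leq n-3$. Then the number of triangulations of $P$ that use none of the $m$ diagonals $a(a+2), a(a+3),\dots, a(a+m+1)$ is \[\sum_{i=0}^{n-3-m} C_i C_{n-3-i},\] where $C_k=\frac{1}{k+1}\binom{2k}{k}$ is the $k$th Catalan number.
   Context: A triangulation of a convex polygon uses non-crossing diagonals to divide it into triangles. *)

theory Defs
  imports Main
begin

text \<open>Combinatorial model of a convex n-gon with vertices 0,...,n-1 in cyclic order.
  A diagonal is a 2-element set of non-adjacent vertices.\<close>

definition is_diagonal :: "nat \<Rightarrow> nat set \<Rightarrow> bool" where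
  "is_diagonal n d \<longleftrightarrow> (\<exists>i j. d = {i, j} \<and> i < j \<and> j < n \<and> j \<noteq> i + 1 \<and> \<not> (i = 0 \<and> j = n - 1))"

text \<open>Two diagonals cross iff their endpoints strictly interleave in the cyclic order
  (for a convex polygon this is exactly crossing in the interior).\<close>

definition crossing :: "nat set \<Rightarrow> nat set \<Rightarrow> bool" where
  "crossing d e \<longleftrightarrow> (\<exists>i j k l. d = {i, j} \<and> e = {k, l} \<and> i < k \<and> k < j \<and> j < l)
                    \<or> (\<exists>i j k l. e = {i, j} \<and> d = {k, l} \<and> i < k \<and> k < j \<and> j < l)"

definition noncrossing :: "nat \<Rightarrow> nat set set \<Rightarrow> bool" where
  "noncrossing n T \<longleftrightarrow> (\<forall>d\<in>T. is_diagonal n d) \<and> (\<forall>d\<in>T. \<forall>e\<in>T. \<not> crossing d e)"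

text \<open>A triangulation: a maximal set of pairwise non-crossing diagonals
  (these are exactly the diagonal sets dividing the convex polygon into triangles).\<close>

definition triangulation :: "nat \<Rightarrow> nat set set \<Rightarrow> bool" where
  "triangulation n T \<longleftrightarrow> noncrossing n T \<and>
     (\<forall>d. is_diagonal n d \<and> d \<notin> T \<longrightarrow> \<not> noncrossing n (insert d T))"

definition catalan :: "nat \<Rightarrow> nat" where
  "catalan k = ((2 * k) choose k) div (k + 1)"

end

theory Submission
  imports Defs "HOL-Computational_Algebra.Formal_Power_Series"
begin

text \<open>
  Rotating the labels preserves diagonals and crossings, so the vertex \<open>a\<close> may be taken to be
  \<open>n - 1\<close>, and the avoided diagonals become \<open>{j, n - 1}\<close> with \<open>0 < j \<le> m\<close>.
  In a triangulation of the polygon \<open>0, \<dots>, n - 1\<close> the triangle on the edge \<open>{0, n - 1}\<close> has a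
  third vertex \<open>c\<close>, and the triangulation splits uniquely into triangulations of the polygons
  \<open>0, \<dots>, c\<close> and \<open>c, \<dots>, n - 1\<close>. This yields the Catalan recurrence for the number of
  triangulations, and the avoided diagonals are absent exactly when \<open>c > m\<close>; summing
  \<open>catalan (c - 1) * catalan (n - 2 - c)\<close> over \<open>m < c < n - 1\<close> gives the formula.
  The Catalan recurrence itself is Vandermonde's identity for \<open>1/2 + 1/2 = 1\<close>, because
  \<open>((1/2) gchoose (k + 1)) * (-4) ^ (k + 1) = -2 * catalan k\<close>.
\<close>

section \<open>The Catalan recurrence\<close>

lemma Suc_times_catalan: "Suc k * catalan k = (2 * k) choose k"
proof -
  have "Suc k * ((2 * k) choose Suc k) = k * ((2 * k) choose k)"
  proof (cases k)
    case (Suc j)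
    then show ?thesis using Suc_times_binomial_add[of k j] by (simp add: mult_2)
  qed simp
  then have "(2 * k) choose k = Suc k * (((2 * k) choose k) - ((2 * k) choose Suc k))"
    by (simp add: diff_mult_distrib2)
  then have "Suc k dvd (2 * k) choose k" by (rule dvdI)
  then show ?thesis unfolding catalan_def Suc_eq_plus1 by (rule dvd_mult_div_cancel)
qed

lemma catalan_Suc_ratio: "(k + 2) * catalan (Suc k) = 2 * (2 * k + 1) * catalan k"
proof -
  define B where "B = (2 * k) choose k"
  define B' where "B' = (2 * Suc k) choose Suc k"
  have "Suc k * B' = 2 * (Suc k * ((2 * k + 1) choose k))"
    unfolding B'_def using Suc_times_binomial[of k "2 * k + 1"] by simp
  also have "Suc k * ((2 * k + 1) choose k) = (2 * k + 1) * B"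
    unfolding B_def using Suc_times_binomial_eq[of "2 * k" k] binomial_symmetric[of k "2 * k + 1"]
    by simp
  finally have central: "Suc k * B' = 2 * (2 * k + 1) * B" by simp
  have "Suc k * ((k + 2) * catalan (Suc k)) = Suc k * B'"
    unfolding B'_def using Suc_times_catalan[of "Suc k"] by simp
  also have "\<dots> = Suc k * (2 * (2 * k + 1) * catalan k)"
    unfolding central B_def Suc_times_catalan[symmetric] by (simp add: algebra_simps)
  finally show ?thesis by (metis mult_cancel1 nat.distinct(1))
qed

lemma gbinomial_half_catalan:
  "((1/2 :: real) gchoose Suc k) * (-4) ^ Suc k = - 2 * real (catalan k)"
proof (induction k)
  case 0
  show ?case by (simp add: catalan_def)
next
  case (Suc k)
  define G where "G = (1/2 :: real) gchoose Suc k"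
  define G' where "G' = (1/2 :: real) gchoose Suc (Suc k)"
  define P where "P = (-4 :: real) ^ Suc k"
  have IH: "G * P = - 2 * real (catalan k)" using Suc.IH unfolding G_def P_def .
  have step: "real (Suc (Suc k)) * G' = (1/2 - real (Suc k)) * G"
    using gbinomial_mult_1[of "1/2 :: real" "Suc k"] unfolding G_def G'_def left_diff_distrib
    by linarith
  have ratio: "real (Suc (Suc k)) * real (catalan (Suc k)) = 2 * (2 * real k + 1) * real (catalan k)"
    using arg_cong[OF catalan_Suc_ratio[of k], of real] by (simp add: algebra_simps)
  have "real (Suc (Suc k)) * (G' * (-4 * P)) = -4 * (real (Suc (Suc k)) * G') * P"
    by (simp only: mult_ac)
  also have "\<dots> = 2 * (2 * real k + 1) * (G * P)"
    unfolding step by (simp add: algebra_simps)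
  also have "\<dots> = - 2 * (2 * (2 * real k + 1) * real (catalan k))"
    unfolding IH by simp
  also have "\<dots> = real (Suc (Suc k)) * (- 2 * real (catalan (Suc k)))"
    unfolding ratio[symmetric] by simp
  finally have "G' * (-4 * P) = - 2 * real (catalan (Suc k))"
    unfolding mult_left_cancel[OF of_nat_neq_0] .
  then show ?case unfolding G'_def P_def power_Suc[of "-4 :: real" "Suc k"] .
qed

lemma catalan_Suc: "catalan (Suc q) = (\<Sum>i = 0..q. catalan i * catalan (q - i))"
proof -
  define h :: "nat \<Rightarrow> real" where "h k = ((1/2) gchoose k) * (-4) ^ k" for k
  have hSuc: "h (Suc k) = - 2 * real (catalan k)" for k
    unfolding h_def by (rule gbinomial_half_catalan)
  have "(\<Sum>k = 0..q + 2. h k * h (q + 2 - k))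
      = (\<Sum>k = 0..q + 2. ((1/2 :: real) gchoose k) * ((1/2) gchoose (q + 2 - k))) * (-4) ^ (q + 2)"
    unfolding h_def sum_distrib_right by (rule sum.cong) (auto simp: power_add[symmetric])
  also have "\<dots> = ((1 :: real) gchoose (q + 2)) * (-4) ^ (q + 2)"
    by (subst gbinomial_Vandermonde) simp
  also have "(1 :: real) gchoose (q + 2) = 0"
    using binomial_gbinomial[of 1 "q + 2", where 'a = real] by simp
  finally have vanish: "(\<Sum>k = 0..q + 2. h k * h (q + 2 - k)) = 0" by simp
  have split: "(\<Sum>k = 0..q + 2. h k * h (q + 2 - k))
      = 2 * h (q + 2) + (\<Sum>i = 0..q. h (Suc i) * h (Suc (q - i)))"
  proof -
    have "(\<Sum>k = 0..q + 2. h k * h (q + 2 - k))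
        = h 0 * h (q + 2) + (\<Sum>k = Suc 0..Suc q. h k * h (q + 2 - k)) + h (q + 2) * h 0"
      by (simp add: sum.atLeast_Suc_atMost)
    also have "(\<Sum>k = Suc 0..Suc q. h k * h (q + 2 - k)) = (\<Sum>i = 0..q. h (Suc i) * h (Suc (q - i)))"
      unfolding sum.shift_bounds_cl_Suc_ivl by (intro sum.cong) (auto simp: Suc_diff_le)
    finally show ?thesis by (simp add: h_def)
  qed
  have "h (q + 2) = - 2 * real (catalan (Suc q))"
    using hSuc[of "Suc q"] by simp
  moreover have "(\<Sum>i = 0..q. h (Suc i) * h (Suc (q - i)))
      = 4 * (\<Sum>i = 0..q. real (catalan i * catalan (q - i)))"
    by (simp add: hSuc sum_distrib_left)
  ultimately have "real (catalan (Suc q)) = (\<Sum>i = 0..q. real (catalan i * catalan (q - i)))"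
    using vanish split by linarith
  then show ?thesis by (metis of_nat_eq_iff of_nat_sum)
qed

lemma crossing_sym: "crossing d e \<longleftrightarrow> crossing e d"
  unfolding crossing_def by blast

lemma crossing_doubletons:
  assumes "i < j" "k < l"
  shows "crossing {i, j} {k, l} \<longleftrightarrow> (i < k \<and> k < j \<and> j < l) \<or> (k < i \<and> i < l \<and> l < j)"
proof
  assume "crossing {i, j} {k, l}"
  then show "(i < k \<and> k < j \<and> j < l) \<or> (k < i \<and> i < l \<and> l < j)"
    using assms unfolding crossing_def doubleton_eq_iff by (elim disjE exE conjE; linarith)
next
  assume "(i < k \<and> k < j \<and> j < l) \<or> (k < i \<and> i < l \<and> l < j)"
  then show "crossing {i, j} {k, l}"
    unfolding crossing_def by blast
qed

lemma crossingE:
  assumes "crossing d e"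
  obtains i j k l where "d = {i, j}" "e = {k, l}" "i < j" "k < l"
    "(i < k \<and> k < j \<and> j < l) \<or> (k < i \<and> i < l \<and> l < j)"
  using assms unfolding crossing_def
proof (elim disjE exE conjE)
  fix i j k l assume "d = {i, j}" "e = {k, l}" "i < k" "k < j" "j < l"
  then show thesis by (intro that[of i j k l]) auto
next
  fix i j k l assume "e = {i, j}" "d = {k, l}" "i < k" "k < j" "j < l"
  then show thesis by (intro that[of k l i j]) auto
qed

lemma not_crossing_self: "\<not> crossing d d"
  unfolding crossing_def doubleton_eq_iff by auto

lemma not_crossing_separated: "d \<subseteq> {..c} \<Longrightarrow> e \<subseteq> {c..} \<Longrightarrow> \<not> crossing d e"
  unfolding crossing_def by auto

lemma not_crossing_nested: "d \<subseteq> {i..j} \<Longrightarrow> \<not> crossing d {i, j}"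
  unfolding crossing_def doubleton_eq_iff by auto

lemma crossing_inside:
  assumes "d \<subseteq> {a..b}" "crossing e d" "\<not> crossing e {a, b}"
  shows "e \<subseteq> {a..b}"
proof -
  obtain x y i j where e: "e = {x, y}" "x < y" and d: "d = {i, j}" "i < j"
    and cr: "(x < i \<and> i < y \<and> y < j) \<or> (i < x \<and> x < j \<and> j < y)"
    using assms(2) by (elim crossingE)
  have "a \<le> i" "j \<le> b" using assms(1) d by auto
  then show ?thesis
    using assms(3) cr unfolding e by (auto simp: crossing_doubletons)
qed

lemma not_crossing_edge: "\<not> crossing e {i, Suc i}"
  by (auto elim!: crossingE simp: doubleton_eq_iff)

lemma pairwise_not_crossing_insert_base:
  assumes "\<forall>d\<in>S. \<forall>e\<in>S. \<not> crossing d e" "\<forall>d\<in>S. d \<subseteq> {a..b}"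
  shows "\<forall>d\<in>insert {a, b} S. \<forall>e\<in>insert {a, b} S. \<not> crossing d e"
proof (intro ballI)
  fix d e assume "d \<in> insert {a, b} S" "e \<in> insert {a, b} S"
  then show "\<not> crossing d e"
    using assms not_crossing_nested[of _ a b] crossing_sym[of _ "{a, b}"] not_crossing_self by auto
qed

section \<open>Triangulations of the polygon on an interval of vertices\<close>

text \<open>The convex polygon with vertices \<open>lo, lo + 1, \<dots>, hi\<close>, whose base \<open>{lo, hi}\<close> is an edge.\<close>

definition interval_diagonal :: "nat \<Rightarrow> nat \<Rightarrow> nat set \<Rightarrow> bool" where
  "interval_diagonal lo hi d \<longleftrightarrow>
     (\<exists>i j. d = {i, j} \<and> lo \<le> i \<and> i < j \<and> j \<le> hi \<and> j \<noteq> Suc i \<and> \<not> (i = lo \<and> j = hi))"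

definition interval_triangulation :: "nat \<Rightarrow> nat \<Rightarrow> nat set set \<Rightarrow> bool" where
  "interval_triangulation lo hi T \<longleftrightarrow>
     (\<forall>d\<in>T. interval_diagonal lo hi d) \<and> (\<forall>d\<in>T. \<forall>e\<in>T. \<not> crossing d e) \<and>
     (\<forall>d. interval_diagonal lo hi d \<and> d \<notin> T \<longrightarrow> (\<exists>e\<in>T. crossing d e))"

lemma interval_triangulation_diagonal:
  "interval_triangulation lo hi T \<Longrightarrow> d \<in> T \<Longrightarrow> interval_diagonal lo hi d"
  unfolding interval_triangulation_def by blast

lemma interval_triangulation_not_crossing:
  "interval_triangulation lo hi T \<Longrightarrow> d \<in> T \<Longrightarrow> e \<in> T \<Longrightarrow> \<not> crossing d e"
  unfolding interval_triangulation_def by blast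

lemma interval_triangulation_maximal:
  "interval_triangulation lo hi T \<Longrightarrow> interval_diagonal lo hi d \<Longrightarrow> d \<notin> T \<Longrightarrow> \<exists>e\<in>T. crossing d e"
  unfolding interval_triangulation_def by blast

lemma interval_diagonalE:
  assumes "interval_diagonal lo hi d"
  obtains i j where "d = {i, j}" "lo \<le> i" "i < j" "j \<le> hi" "j \<noteq> Suc i" "\<not> (i = lo \<and> j = hi)"
  using assms unfolding interval_diagonal_def by blast

lemma interval_diagonal_subset: "interval_diagonal lo hi d \<Longrightarrow> d \<subseteq> {lo..hi}"
  by (auto elim: interval_diagonalE)

lemma interval_diagonal_mono:
  "interval_diagonal a b d \<Longrightarrow> lo \<le> a \<Longrightarrow> b \<le> hi \<Longrightarrow> interval_diagonal lo hi d"
  unfolding interval_diagonal_def by fastforce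

lemma interval_diagonal_doubleton:
  "lo \<le> i \<Longrightarrow> i < j \<Longrightarrow> j \<le> hi \<Longrightarrow> j \<noteq> Suc i \<Longrightarrow> \<not> (i = lo \<and> j = hi) \<Longrightarrow>
    interval_diagonal lo hi {i, j}"
  unfolding interval_diagonal_def by blast

lemma triangulation_iff_interval_triangulation:
  assumes "0 < n"
  shows "triangulation n T \<longleftrightarrow> interval_triangulation 0 (n - 1) T"
proof -
  have diag: "is_diagonal n d \<longleftrightarrow> interval_diagonal 0 (n - 1) d" for d
    unfolding is_diagonal_def interval_diagonal_def using assms by fastforce
  show ?thesis
    unfolding triangulation_def interval_triangulation_def noncrossing_def diag
    using crossing_sym not_crossing_self by auto
qed

lemma interval_triangulation_edge: "interval_triangulation lo (Suc lo) T \<longleftrightarrow> T = {}"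
proof -
  have "\<not> interval_diagonal lo (Suc lo) d" for d
    by (auto elim: interval_diagonalE)
  then show ?thesis unfolding interval_triangulation_def by auto
qed

lemma interval_triangulation_restrict:
  assumes T: "interval_triangulation lo hi T" and "lo \<le> a" "b \<le> hi"
    and uncrossed: "\<forall>e\<in>T. \<not> crossing e {a, b}"
  shows "interval_triangulation a b {d \<in> T. interval_diagonal a b d}"
proof -
  have "\<exists>e\<in>{d \<in> T. interval_diagonal a b d}. crossing d e"
    if d: "interval_diagonal a b d" "d \<notin> T" for d
  proof -
    obtain e where e: "e \<in> T" "crossing d e"
      using interval_triangulation_maximal[OF T interval_diagonal_mono[OF d(1) \<open>lo \<le> a\<close> \<open>b \<le> hi\<close>] d(2)]
      by blast
    have d_inside: "d \<subseteq> {a..b}" using interval_diagonal_subset[OF d(1)] .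
    have "e \<subseteq> {a..b}"
      using crossing_inside[OF d_inside] e uncrossed crossing_sym by blast
    moreover have "e \<noteq> {a, b}"
      using not_crossing_nested[OF d_inside] e(2) by blast
    moreover have "interval_diagonal lo hi e" using interval_triangulation_diagonal[OF T e(1)] .
    ultimately have "interval_diagonal a b e"
      by (elim interval_diagonalE) (auto intro!: interval_diagonal_doubleton)
    then show ?thesis using e by blast
  qed
  then show ?thesis using T unfolding interval_triangulation_def by blast
qed

text \<open>The triangle of a triangulation on the base edge \<open>{lo, hi}\<close> has a third vertex \<open>c\<close>, its apex;
  \<open>apex_sides lo hi c\<close> are those of its two other sides that are diagonals rather than edges.\<close>

definition apex_sides :: "nat \<Rightarrow> nat \<Rightarrow> nat \<Rightarrow> nat set set" where
  "apex_sides lo hi c = (if c = Suc lo then {} else {{lo, c}}) \<union> (if Suc c = hi then {} else {{c, hi}})"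

definition has_apex :: "nat \<Rightarrow> nat \<Rightarrow> nat \<Rightarrow> nat set set \<Rightarrow> bool" where
  "has_apex lo hi c T \<longleftrightarrow> lo < c \<and> c < hi \<and> apex_sides lo hi c \<subseteq> T"

lemma apex_sides_interval_diagonal:
  "lo < c \<Longrightarrow> c < hi \<Longrightarrow> d \<in> apex_sides lo hi c \<Longrightarrow> interval_diagonal lo hi d"
  unfolding apex_sides_def by (auto split: if_splits intro!: interval_diagonal_doubleton)

lemma has_apex_uncrossed:
  assumes T: "interval_triangulation lo hi T" and c: "has_apex lo hi c T" and "e \<in> T"
  shows "\<not> crossing e {lo, c}" "\<not> crossing e {c, hi}"
proof -
  have sides: "\<not> crossing e s" if "s \<in> apex_sides lo hi c" for s
    using interval_triangulation_not_crossing[OF T \<open>e \<in> T\<close>] c that unfolding has_apex_def by blast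
  show "\<not> crossing e {lo, c}"
  proof (cases "c = Suc lo")
    case True
    then show ?thesis using not_crossing_edge by simp
  next
    case False
    then show ?thesis using sides by (simp add: apex_sides_def)
  qed
  show "\<not> crossing e {c, hi}"
  proof (cases "Suc c = hi")
    case True
    then show ?thesis using not_crossing_edge by auto
  next
    case False
    then show ?thesis using sides by (simp add: apex_sides_def)
  qed
qed

lemma interval_diagonal_split:
  assumes c: "lo < c" "c < hi" and d: "interval_diagonal lo hi d"
    and uncrossed: "\<not> crossing d {lo, c}" "\<not> crossing d {c, hi}"
  shows "interval_diagonal lo c d \<or> interval_diagonal c hi d \<or> d \<in> apex_sides lo hi c"
proof -
  obtain i j where ij: "d = {i, j}" "lo \<le> i" "i < j" "j \<le> hi" "j \<noteq> Suc i" "\<not> (i = lo \<and> j = hi)"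
    using d by (rule interval_diagonalE)
  consider "j \<le> c" | "c \<le> i" | "i < c" "c < j" by linarith
  then show ?thesis
  proof cases
    case 1
    then show ?thesis
      using ij c by (cases "i = lo \<and> j = c") (auto simp: apex_sides_def intro: interval_diagonal_doubleton)
  next
    case 2
    then show ?thesis
      using ij c by (cases "i = c \<and> j = hi") (auto simp: apex_sides_def intro: interval_diagonal_doubleton)
  next
    case 3
    then show ?thesis
      using ij c uncrossed by (cases "i = lo") (auto simp: crossing_doubletons)
  qed
qed

lemma has_apex_unique:
  assumes T: "interval_triangulation lo hi T" and "has_apex lo hi c T" "has_apex lo hi c' T"
  shows "c = c'"
proof -
  have False if "has_apex lo hi x T" "has_apex lo hi y T" "x < y" for x y
  proof -
    have "{lo, y} \<in> T" "{x, hi} \<in> T" "crossing {lo, y} {x, hi}"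
      using that unfolding has_apex_def apex_sides_def by (auto simp: crossing_doubletons)
    then show False using interval_triangulation_not_crossing[OF T] by blast
  qed
  then show ?thesis using assms by (meson linorder_neqE_nat)
qed

text \<open>The apex is the farthest vertex joined to \<open>lo\<close>; maximality of \<open>T\<close> then forces the side \<open>{c, hi}\<close>.\<close>

lemma has_apex_exists:
  assumes T: "interval_triangulation lo hi T" and "lo + 2 \<le> hi"
  shows "\<exists>c. has_apex lo hi c T"
proof -
  define S where "S = {j. lo < j \<and> j < hi \<and> (j = Suc lo \<or> {lo, j} \<in> T)}"
  have fin: "finite S" unfolding S_def by (rule finite_subset[of _ "{..<hi}"]) auto
  have "Suc lo \<in> S" unfolding S_def using assms(2) by simp
  define c where "c = Max S"
  have "c \<in> S" unfolding c_def using fin \<open>Suc lo \<in> S\<close> by (auto intro: Max_in)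
  have c_max: "j \<le> c" if "j \<in> S" for j unfolding c_def using fin that by simp
  have c: "lo < c" "c < hi" and left: "c \<noteq> Suc lo \<Longrightarrow> {lo, c} \<in> T"
    using \<open>c \<in> S\<close> unfolding S_def by auto
  have right: "{c, hi} \<in> T" if "Suc c \<noteq> hi"
  proof (rule ccontr)
    assume "{c, hi} \<notin> T"
    moreover have "interval_diagonal lo hi {c, hi}"
      using c that by (intro interval_diagonal_doubleton) auto
    ultimately obtain e where e: "e \<in> T" "crossing {c, hi} e"
      using interval_triangulation_maximal[OF T] by blast
    have "interval_diagonal lo hi e" using interval_triangulation_diagonal[OF T e(1)] .
    then obtain x y where xy: "e = {x, y}" "lo \<le> x" "x < y" "y \<le> hi"
      by (elim interval_diagonalE) auto
    then have "x < c" "c < y" "y < hi"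
      using e(2) crossing_doubletons[OF \<open>c < hi\<close> \<open>x < y\<close>] by auto
    show False
    proof (cases "x = lo")
      case True
      then have "y \<in> S" using e(1) xy \<open>c < y\<close> \<open>y < hi\<close> c unfolding S_def by auto
      then show False using c_max \<open>c < y\<close> by fastforce
    next
      case False
      then have "crossing {lo, c} e"
        using xy \<open>x < c\<close> \<open>c < y\<close> c by (simp add: crossing_doubletons)
      moreover have "{lo, c} \<in> T" using left xy \<open>x < c\<close> False by auto
      ultimately show False using interval_triangulation_not_crossing[OF T] e(1) by blast
    qed
  qed
  have "apex_sides lo hi c \<subseteq> T"
    using left right by (simp add: apex_sides_def)
  then show ?thesis using c unfolding has_apex_def by blast
qed

lemma interval_triangulation_glue:
  assumes T1: "interval_triangulation lo c T1" and T2: "interval_triangulation c hi T2"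
    and c: "lo < c" "c < hi"
  shows "interval_triangulation lo hi (T1 \<union> T2 \<union> apex_sides lo hi c)"
proof -
  let ?U = "T1 \<union> T2 \<union> apex_sides lo hi c"
  define L where "L = insert {lo, c} T1"
  define R where "R = insert {c, hi} T2"
  have U_sub: "?U \<subseteq> L \<union> R" unfolding L_def R_def apex_sides_def by auto
  have L_in: "\<forall>d\<in>T1. d \<subseteq> {lo..c}" and R_in: "\<forall>d\<in>T2. d \<subseteq> {c..hi}"
    using interval_diagonal_subset interval_triangulation_diagonal T1 T2 by blast+
  have L_nc: "\<forall>d\<in>L. \<forall>e\<in>L. \<not> crossing d e"
    unfolding L_def using interval_triangulation_not_crossing[OF T1] L_in
    by (intro pairwise_not_crossing_insert_base) auto
  have R_nc: "\<forall>d\<in>R. \<forall>e\<in>R. \<not> crossing d e"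
    unfolding R_def using interval_triangulation_not_crossing[OF T2] R_in
    by (intro pairwise_not_crossing_insert_base) auto
  have LR: "\<not> crossing d e" if "d \<in> L" "e \<in> R" for d e
  proof (rule not_crossing_separated)
    show "d \<subseteq> {..c}" using that(1) L_in c unfolding L_def by fastforce
    show "e \<subseteq> {c..}" using that(2) R_in c unfolding R_def by fastforce
  qed
  have nc: "\<not> crossing d e" if "d \<in> ?U" "e \<in> ?U" for d e
    using that U_sub L_nc R_nc LR crossing_sym[of d e] by blast
  have diag: "interval_diagonal lo hi d" if "d \<in> ?U" for d
    using that interval_triangulation_diagonal[OF T1] interval_triangulation_diagonal[OF T2]
      apex_sides_interval_diagonal[OF c] interval_diagonal_mono c by (meson UnE less_imp_le_nat order_refl)
  have maximal: "\<exists>e\<in>?U. crossing d e" if d: "interval_diagonal lo hi d" "d \<notin> ?U" for d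
  proof (cases "crossing d {lo, c} \<or> crossing d {c, hi}")
    case True
    then show ?thesis
      using not_crossing_edge[of d lo] not_crossing_edge[of d c]
      by (auto simp: apex_sides_def split: if_splits)
  next
    case False
    then have "interval_diagonal lo c d \<or> interval_diagonal c hi d \<or> d \<in> apex_sides lo hi c"
      using interval_diagonal_split[OF c d(1)] by blast
    then show ?thesis
      using d(2) interval_triangulation_maximal[OF T1, of d] interval_triangulation_maximal[OF T2, of d]
      by blast
  qed
  show ?thesis
    unfolding interval_triangulation_def using diag nc maximal by blast
qed

lemma has_apex_restrict:
  assumes T: "interval_triangulation lo hi T" and c: "has_apex lo hi c T"
  shows "interval_triangulation lo c {d \<in> T. interval_diagonal lo c d}"
    and "interval_triangulation c hi {d \<in> T. interval_diagonal c hi d}"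
  using c has_apex_uncrossed[OF T c] unfolding has_apex_def
  by (auto intro!: interval_triangulation_restrict[OF T])

lemma has_apex_decompose:
  assumes T: "interval_triangulation lo hi T" and c: "has_apex lo hi c T"
  shows "{d \<in> T. interval_diagonal lo c d} \<union> {d \<in> T. interval_diagonal c hi d} \<union> apex_sides lo hi c = T"
proof -
  have "interval_diagonal lo c d \<or> interval_diagonal c hi d \<or> d \<in> apex_sides lo hi c" if "d \<in> T" for d
    using c interval_triangulation_diagonal[OF T that] has_apex_uncrossed[OF T c that]
      interval_diagonal_split[of lo c hi d] unfolding has_apex_def by blast
  then show ?thesis using c unfolding has_apex_def by blast
qed

lemma base_not_interval_diagonal: "\<not> interval_diagonal lo hi {lo, hi}"
  by (auto elim!: interval_diagonalE simp: doubleton_eq_iff)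

lemma apex_sides_not_interval_diagonal:
  assumes c: "lo < c" "c < hi" and s: "s \<in> apex_sides lo hi c"
  shows "\<not> interval_diagonal lo c s" "\<not> interval_diagonal c hi s"
proof -
  have "s = {lo, c} \<or> s = {c, hi}" using s unfolding apex_sides_def by (auto split: if_splits)
  then show "\<not> interval_diagonal lo c s" "\<not> interval_diagonal c hi s"
    using base_not_interval_diagonal interval_diagonal_subset[of lo c s] interval_diagonal_subset[of c hi s] c
    by auto
qed

lemma glue_restrict:
  assumes T1: "interval_triangulation lo c T1" and T2: "interval_triangulation c hi T2"
    and c: "lo < c" "c < hi"
  shows "{d \<in> T1 \<union> T2 \<union> apex_sides lo hi c. interval_diagonal lo c d} = T1"
    and "{d \<in> T1 \<union> T2 \<union> apex_sides lo hi c. interval_diagonal c hi d} = T2"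
proof -
  have disjoint: "\<not> interval_diagonal c hi d" if "interval_diagonal lo c d" for d
    using that by (auto elim!: interval_diagonalE simp: doubleton_eq_iff)
  show "{d \<in> T1 \<union> T2 \<union> apex_sides lo hi c. interval_diagonal lo c d} = T1"
    using interval_triangulation_diagonal[OF T1] interval_triangulation_diagonal[OF T2] disjoint
      apex_sides_not_interval_diagonal(1)[OF c] by blast
  show "{d \<in> T1 \<union> T2 \<union> apex_sides lo hi c. interval_diagonal c hi d} = T2"
    using interval_triangulation_diagonal[OF T2] interval_triangulation_diagonal[OF T1, THEN disjoint]
      apex_sides_not_interval_diagonal(2)[OF c] by blast
qed

section \<open>Counting triangulations by their apex\<close>

lemma finite_interval_triangulations: "finite {T. interval_triangulation lo hi T}"
  by (rule finite_subset[of _ "Pow (Pow {lo..hi})"])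
    (auto dest: interval_triangulation_diagonal interval_diagonal_subset)

lemma card_has_apex:
  assumes c: "lo < c" "c < hi"
  shows "card {T. interval_triangulation lo hi T \<and> has_apex lo hi c T}
       = card {T. interval_triangulation lo c T} * card {T. interval_triangulation c hi T}"
proof -
  let ?glue = "\<lambda>(T1, T2). T1 \<union> T2 \<union> apex_sides lo hi c"
  let ?split = "\<lambda>T. ({d \<in> T. interval_diagonal lo c d}, {d \<in> T. interval_diagonal c hi d})"
  have "bij_betw ?glue ({T. interval_triangulation lo c T} \<times> {T. interval_triangulation c hi T})
      {T. interval_triangulation lo hi T \<and> has_apex lo hi c T}"
  proof (rule bij_betw_byWitness[where f' = ?split])
    show "\<forall>p\<in>{T. interval_triangulation lo c T} \<times> {T. interval_triangulation c hi T}. ?split (?glue p) = p"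
      using glue_restrict[OF _ _ c] by auto
    show "\<forall>T\<in>{T. interval_triangulation lo hi T \<and> has_apex lo hi c T}. ?glue (?split T) = T"
      using has_apex_decompose by auto
    show "?glue ` ({T. interval_triangulation lo c T} \<times> {T. interval_triangulation c hi T})
        \<subseteq> {T. interval_triangulation lo hi T \<and> has_apex lo hi c T}"
      using interval_triangulation_glue[OF _ _ c] c unfolding has_apex_def by auto
    show "?split ` {T. interval_triangulation lo hi T \<and> has_apex lo hi c T}
        \<subseteq> {T. interval_triangulation lo c T} \<times> {T. interval_triangulation c hi T}"
      using has_apex_restrict by auto
  qed
  from bij_betw_same_card[OF this] show ?thesis by (simp add: card_cartesian_product)
qed

lemma card_has_apex_in:
  assumes C: "C \<subseteq> {lo<..<hi}"
  shows "card {T. interval_triangulation lo hi T \<and> (\<exists>c\<in>C. has_apex lo hi c T)}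
       = (\<Sum>c\<in>C. card {T. interval_triangulation lo c T} * card {T. interval_triangulation c hi T})"
proof -
  have "{T. interval_triangulation lo hi T \<and> (\<exists>c\<in>C. has_apex lo hi c T)}
      = (\<Union>c\<in>C. {T. interval_triangulation lo hi T \<and> has_apex lo hi c T})"
    by blast
  also have "card \<dots> = (\<Sum>c\<in>C. card {T. interval_triangulation lo hi T \<and> has_apex lo hi c T})"
  proof (rule card_UN_disjoint)
    show "finite C" using C finite_subset by blast
    show "\<forall>c\<in>C. finite {T. interval_triangulation lo hi T \<and> has_apex lo hi c T}"
      using finite_interval_triangulations[of lo hi] by (auto elim: rev_finite_subset)
    show "\<forall>c\<in>C. \<forall>c'\<in>C. c \<noteq> c' \<longrightarrow>
        {T. interval_triangulation lo hi T \<and> has_apex lo hi c T} \<inter>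
        {T. interval_triangulation lo hi T \<and> has_apex lo hi c' T} = {}"
      using has_apex_unique by blast
  qed
  also have "\<dots> = (\<Sum>c\<in>C. card {T. interval_triangulation lo c T} * card {T. interval_triangulation c hi T})"
    using C by (intro sum.cong) (auto simp: card_has_apex)
  finally show ?thesis .
qed

theorem card_interval_triangulations:
  "lo < hi \<Longrightarrow> card {T. interval_triangulation lo hi T} = catalan (hi - lo - 1)"
proof (induction "hi - lo" arbitrary: lo hi rule: less_induct)
  case less
  consider "hi = Suc lo" | "lo + 2 \<le> hi" using less.prems by linarith
  then show ?case
  proof cases
    case 1
    then have "{T. interval_triangulation lo hi T} = {{}}"
      using interval_triangulation_edge by auto
    then show ?thesis using 1 by (simp add: catalan_def)
  next
    case 2
    define p where "p = hi - lo - 2"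
    have "{T. interval_triangulation lo hi T}
        = {T. interval_triangulation lo hi T \<and> (\<exists>c\<in>{lo<..<hi}. has_apex lo hi c T)}"
    proof -
      have "\<exists>c\<in>{lo<..<hi}. has_apex lo hi c T" if "interval_triangulation lo hi T" for T
        using has_apex_exists[OF that 2] unfolding has_apex_def by auto
      then show ?thesis by blast
    qed
    then have "card {T. interval_triangulation lo hi T}
        = (\<Sum>c\<in>{lo<..<hi}. card {T. interval_triangulation lo c T} * card {T. interval_triangulation c hi T})"
      by (simp add: card_has_apex_in)
    also have "\<dots> = (\<Sum>c\<in>{lo<..<hi}. catalan (c - lo - 1) * catalan (hi - c - 1))"
      by (rule sum.cong) (auto simp: less.hyps)
    also have "\<dots> = (\<Sum>i = 0..p. catalan i * catalan (p - i))"
      by (rule sum.reindex_bij_witness[of _ "\<lambda>i. lo + 1 + i" "\<lambda>c. c - lo - 1"])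
        (use 2 in \<open>auto simp: p_def\<close>)
    also have "\<dots> = catalan (hi - lo - 1)"
      using 2 catalan_Suc[of p] by (simp add: p_def Suc_diff_Suc numeral_2_eq_2)
    finally show ?thesis .
  qed
qed

text \<open>An apex \<open>c \<le> lo + m\<close> contributes the avoided side \<open>{c, hi}\<close>, while the side \<open>{lo, c}\<close>
  of an apex \<open>c > lo + m\<close> crosses every avoided diagonal.\<close>

lemma avoiding_fan_iff_apex_beyond:
  assumes T: "interval_triangulation lo hi T" and "lo + m + 2 \<le> hi"
  shows "(\<forall>j\<in>{lo<..lo + m}. {j, hi} \<notin> T) \<longleftrightarrow> (\<exists>c\<in>{lo + m<..<hi}. has_apex lo hi c T)"
proof
  assume avoid: "\<forall>j\<in>{lo<..lo + m}. {j, hi} \<notin> T"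
  obtain c where c: "has_apex lo hi c T" using has_apex_exists[OF T] assms(2) by auto
  have "\<not> c \<le> lo + m"
  proof
    assume "c \<le> lo + m"
    moreover have "{c, hi} \<in> T" using c \<open>c \<le> lo + m\<close> assms(2)
      unfolding has_apex_def apex_sides_def by auto
    ultimately show False using avoid c unfolding has_apex_def by auto
  qed
  then show "\<exists>c\<in>{lo + m<..<hi}. has_apex lo hi c T" using c unfolding has_apex_def by auto
next
  assume "\<exists>c\<in>{lo + m<..<hi}. has_apex lo hi c T"
  then obtain c where c: "has_apex lo hi c T" "lo + m < c" by auto
  show "\<forall>j\<in>{lo<..lo + m}. {j, hi} \<notin> T"
  proof
    fix j assume j: "j \<in> {lo<..lo + m}"
    then have "{lo, c} \<in> T" using c unfolding has_apex_def apex_sides_def by auto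
    moreover have "crossing {j, hi} {lo, c}"
      using j c unfolding has_apex_def by (auto simp: crossing_doubletons)
    ultimately show "{j, hi} \<notin> T" using interval_triangulation_not_crossing[OF T] by blast
  qed
qed

lemma card_avoiding_fan:
  assumes "lo + m + 2 \<le> hi"
  shows "card {T. interval_triangulation lo hi T \<and> (\<forall>j\<in>{lo<..lo + m}. {j, hi} \<notin> T)}
       = (\<Sum>c\<in>{lo + m<..<hi}. catalan (c - lo - 1) * catalan (hi - c - 1))"
proof -
  have "{T. interval_triangulation lo hi T \<and> (\<forall>j\<in>{lo<..lo + m}. {j, hi} \<notin> T)}
      = {T. interval_triangulation lo hi T \<and> (\<exists>c\<in>{lo + m<..<hi}. has_apex lo hi c T)}"
    using avoiding_fan_iff_apex_beyond[OF _ assms] by blast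
  also have "card \<dots>
      = (\<Sum>c\<in>{lo + m<..<hi}. card {T. interval_triangulation lo c T} * card {T. interval_triangulation c hi T})"
    by (rule card_has_apex_in) auto
  also have "\<dots> = (\<Sum>c\<in>{lo + m<..<hi}. catalan (c - lo - 1) * catalan (hi - c - 1))"
    by (rule sum.cong) (auto simp: card_interval_triangulations)
  finally show ?thesis .
qed

section \<open>Rotating the polygon\<close>

lemma is_diagonalE:
  assumes "is_diagonal n d"
  obtains i j where "d = {i, j}" "i < j" "j < n" "j \<noteq> Suc i" "\<not> (i = 0 \<and> j = n - 1)"
  using assms unfolding is_diagonal_def by auto

lemma is_diagonal_doubleton:
  "i < j \<Longrightarrow> j < n \<Longrightarrow> j \<noteq> Suc i \<Longrightarrow> \<not> (i = 0 \<and> j = n - 1) \<Longrightarrow> is_diagonal n {i, j}"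
  unfolding is_diagonal_def by auto

lemma is_diagonal_subset: "is_diagonal n d \<Longrightarrow> d \<subseteq> {..<n}"
  unfolding is_diagonal_def by auto

lemma triangulation_iff:
  "triangulation n T \<longleftrightarrow> (\<forall>d\<in>T. is_diagonal n d) \<and> (\<forall>d\<in>T. \<forall>e\<in>T. \<not> crossing d e) \<and>
     (\<forall>d. is_diagonal n d \<and> d \<notin> T \<longrightarrow> (\<exists>e\<in>T. crossing d e))"
  unfolding triangulation_def noncrossing_def using crossing_sym not_crossing_self by auto

lemma triangulation_subset_Pow: "triangulation n T \<Longrightarrow> T \<subseteq> Pow {..<n}"
  unfolding triangulation_def noncrossing_def using is_diagonal_subset by blast

lemma triangulation_image:
  assumes inverse: "\<And>x. x < n \<Longrightarrow> f (g x) = x"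
    and diagonal_f: "\<And>d. is_diagonal n d \<Longrightarrow> is_diagonal n (f ` d)"
    and diagonal_g: "\<And>d. is_diagonal n d \<Longrightarrow> is_diagonal n (g ` d)"
    and crossing_f: "\<And>d e. is_diagonal n d \<Longrightarrow> is_diagonal n e \<Longrightarrow> crossing (f ` d) (f ` e) \<longleftrightarrow> crossing d e"
    and T: "triangulation n T"
  shows "triangulation n ((`) f ` T)"
proof -
  have diagonals: "\<forall>d\<in>T. is_diagonal n d" and nc: "\<forall>d\<in>T. \<forall>e\<in>T. \<not> crossing d e"
    and maximal: "\<And>d. is_diagonal n d \<Longrightarrow> d \<notin> T \<Longrightarrow> \<exists>e\<in>T. crossing d e"
    using T unfolding triangulation_iff by blast+
  have "\<exists>e\<in>(`) f ` T. crossing d' e" if d': "is_diagonal n d'" "d' \<notin> (`) f ` T" for d'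
  proof -
    have "f ` g ` d' = d'"
      using inverse is_diagonal_subset[OF d'(1)] by (force simp: image_image)
    moreover have "is_diagonal n (g ` d')" using diagonal_g[OF d'(1)] .
    ultimately obtain e where "e \<in> T" "crossing (g ` d') e"
      using maximal d'(2) by (metis image_eqI)
    then have "crossing d' (f ` e)"
      using crossing_f[OF \<open>is_diagonal n (g ` d')\<close>] diagonals \<open>f ` g ` d' = d'\<close> by auto
    then show ?thesis using \<open>e \<in> T\<close> by blast
  qed
  then show ?thesis
    unfolding triangulation_iff using diagonals nc diagonal_f crossing_f by auto
qed

definition rotate_vertex :: "nat \<Rightarrow> nat \<Rightarrow> nat" where
  "rotate_vertex n x = Suc x mod n"

definition unrotate_vertex :: "nat \<Rightarrow> nat \<Rightarrow> nat" where
  "unrotate_vertex n x = (x + (n - 1)) mod n"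

lemma rotate_vertex_eq: "x < n \<Longrightarrow> rotate_vertex n x = (if Suc x = n then 0 else Suc x)"
  unfolding rotate_vertex_def by auto

lemma unrotate_vertex_eq: "x < n \<Longrightarrow> unrotate_vertex n x = (if x = 0 then n - 1 else x - 1)"
  unfolding unrotate_vertex_def by (auto simp: mod_if)

lemma rotate_unrotate_vertex: "x < n \<Longrightarrow> rotate_vertex n (unrotate_vertex n x) = x"
  by (simp add: rotate_vertex_eq unrotate_vertex_eq)

lemma unrotate_rotate_vertex: "x < n \<Longrightarrow> unrotate_vertex n (rotate_vertex n x) = x"
  by (auto simp: rotate_vertex_eq unrotate_vertex_eq)

lemma rotate_unrotate_image: "d \<subseteq> {..<n} \<Longrightarrow> rotate_vertex n ` unrotate_vertex n ` d = d"
  by (force simp: image_image rotate_unrotate_vertex)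

lemma unrotate_rotate_image: "d \<subseteq> {..<n} \<Longrightarrow> unrotate_vertex n ` rotate_vertex n ` d = d"
  by (force simp: image_image unrotate_rotate_vertex)

lemma is_diagonal_rotate:
  assumes "is_diagonal n d"
  shows "is_diagonal n (rotate_vertex n ` d)"
proof -
  obtain i j where ij: "d = {i, j}" "i < j" "j < n" "j \<noteq> Suc i" "\<not> (i = 0 \<and> j = n - 1)"
    using assms by (rule is_diagonalE)
  show ?thesis
  proof (cases "Suc j = n")
    case True
    then have image: "rotate_vertex n ` d = {0, Suc i}" using ij by (auto simp: rotate_vertex_eq)
    show ?thesis unfolding image by (rule is_diagonal_doubleton) (use ij True in linarith)+
  next
    case False
    then have image: "rotate_vertex n ` d = {Suc i, Suc j}" using ij by (auto simp: rotate_vertex_eq)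
    show ?thesis unfolding image by (rule is_diagonal_doubleton) (use ij False in linarith)+
  qed
qed

lemma is_diagonal_unrotate:
  assumes "is_diagonal n d"
  shows "is_diagonal n (unrotate_vertex n ` d)"
proof -
  obtain i j where ij: "d = {i, j}" "i < j" "j < n" "j \<noteq> Suc i" "\<not> (i = 0 \<and> j = n - 1)"
    using assms by (rule is_diagonalE)
  show ?thesis
  proof (cases "i = 0")
    case True
    then have image: "unrotate_vertex n ` d = {j - 1, n - 1}" using ij by (auto simp: unrotate_vertex_eq)
    show ?thesis unfolding image by (rule is_diagonal_doubleton) (use ij True in linarith)+
  next
    case False
    then have image: "unrotate_vertex n ` d = {i - 1, j - 1}" using ij by (auto simp: unrotate_vertex_eq)
    show ?thesis unfolding image by (rule is_diagonal_doubleton) (use ij False in linarith)+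
  qed
qed

lemma crossing_rotate:
  assumes "is_diagonal n d" "is_diagonal n e"
  shows "crossing (rotate_vertex n ` d) (rotate_vertex n ` e) \<longleftrightarrow> crossing d e"
proof -
  obtain i j where d: "d = {i, j}" "i < j" "j < n"
    using assms(1) by (rule is_diagonalE)
  obtain k l where e: "e = {k, l}" "k < l" "l < n"
    using assms(2) by (rule is_diagonalE)
  have image: "rotate_vertex n ` {x, y} = (if Suc y = n then {0, Suc x} else {Suc x, Suc y})"
    if "x < y" "y < n" for x y
    using that by (auto simp: rotate_vertex_eq)
  show ?thesis
    unfolding d e image[OF d(2,3)] image[OF e(2,3)]
    using d e by (cases "Suc j = n"; cases "Suc l = n") (simp_all add: crossing_doubletons)
qed

lemma crossing_unrotate:
  assumes "is_diagonal n d" "is_diagonal n e"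
  shows "crossing (unrotate_vertex n ` d) (unrotate_vertex n ` e) \<longleftrightarrow> crossing d e"
  using crossing_rotate[OF is_diagonal_unrotate[OF assms(1)] is_diagonal_unrotate[OF assms(2)]]
  by (simp add: rotate_unrotate_image is_diagonal_subset assms)

lemma triangulation_rotate: "triangulation n T \<Longrightarrow> triangulation n ((`) (rotate_vertex n) ` T)"
  by (rule triangulation_image[OF rotate_unrotate_vertex is_diagonal_rotate is_diagonal_unrotate crossing_rotate])

lemma triangulation_unrotate: "triangulation n T \<Longrightarrow> triangulation n ((`) (unrotate_vertex n) ` T)"
  by (rule triangulation_image[OF unrotate_rotate_vertex is_diagonal_unrotate is_diagonal_rotate crossing_unrotate])

definition avoiding_triangulations :: "nat \<Rightarrow> nat set \<Rightarrow> nat \<Rightarrow> nat set set set" where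
  "avoiding_triangulations n K a = {T. triangulation n T \<and> (\<forall>k\<in>K. {a, (a + k) mod n} \<notin> T)}"

lemma rotate_image_mem_iff:
  assumes T: "triangulation n T" and D: "D \<subseteq> {..<n}"
  shows "rotate_vertex n ` D \<in> (`) (rotate_vertex n) ` T \<longleftrightarrow> D \<in> T"
proof (rule inj_on_image_mem_iff)
  show "inj_on ((`) (rotate_vertex n)) (Pow {..<n})"
    by (intro inj_on_image_Pow inj_on_inverseI[where g = "unrotate_vertex n"]) (simp add: unrotate_rotate_vertex)
  show "T \<subseteq> Pow {..<n}" using triangulation_subset_Pow[OF T] .
qed (use D in auto)

lemma rotate_vertex_avoided: "rotate_vertex n ` {a, (a + k) mod n} = {Suc a mod n, (Suc a mod n + k) mod n}"
  unfolding rotate_vertex_def by (simp add: mod_Suc_eq mod_add_left_eq)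

lemma unrotate_rotate_triangulation:
  assumes "triangulation n T"
  shows "(`) (unrotate_vertex n) ` (`) (rotate_vertex n) ` T = T"
proof -
  have "\<forall>d\<in>T. unrotate_vertex n ` rotate_vertex n ` d = d"
    using triangulation_subset_Pow[OF assms] unrotate_rotate_image by blast
  then show ?thesis by (simp add: image_image)
qed

lemma rotate_unrotate_triangulation:
  assumes "triangulation n T"
  shows "(`) (rotate_vertex n) ` (`) (unrotate_vertex n) ` T = T"
proof -
  have "\<forall>d\<in>T. rotate_vertex n ` unrotate_vertex n ` d = d"
    using triangulation_subset_Pow[OF assms] rotate_unrotate_image by blast
  then show ?thesis by (simp add: image_image)
qed

lemma rotate_avoided_mem_iff:
  assumes "triangulation n T" "a < n"
  shows "{Suc a mod n, (Suc a mod n + k) mod n} \<in> (`) (rotate_vertex n) ` T \<longleftrightarrow> {a, (a + k) mod n} \<in> T"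
  unfolding rotate_vertex_avoided[symmetric] using assms by (intro rotate_image_mem_iff) auto

lemma rotate_avoiding_triangulations:
  assumes "a < n" "T \<in> avoiding_triangulations n K a"
  shows "(`) (rotate_vertex n) ` T \<in> avoiding_triangulations n K (Suc a mod n)"
proof -
  have T: "triangulation n T" "\<forall>k\<in>K. {a, (a + k) mod n} \<notin> T"
    using assms(2) unfolding avoiding_triangulations_def by auto
  then have "\<forall>k\<in>K. {Suc a mod n, (Suc a mod n + k) mod n} \<notin> (`) (rotate_vertex n) ` T"
    using rotate_avoided_mem_iff[OF T(1) assms(1)] by blast
  with triangulation_rotate[OF T(1)] show ?thesis
    unfolding avoiding_triangulations_def by (intro CollectI conjI)
qed

lemma unrotate_avoiding_triangulations:
  assumes "a < n" "T \<in> avoiding_triangulations n K (Suc a mod n)"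
  shows "(`) (unrotate_vertex n) ` T \<in> avoiding_triangulations n K a"
proof -
  have T: "triangulation n T" "\<forall>k\<in>K. {Suc a mod n, (Suc a mod n + k) mod n} \<notin> T"
    using assms(2) unfolding avoiding_triangulations_def by auto
  then have "\<forall>k\<in>K. {a, (a + k) mod n} \<notin> (`) (unrotate_vertex n) ` T"
    using rotate_avoided_mem_iff[OF triangulation_unrotate[OF T(1)] assms(1)]
      rotate_unrotate_triangulation[OF T(1)] by metis
  with triangulation_unrotate[OF T(1)] show ?thesis
    unfolding avoiding_triangulations_def by (intro CollectI conjI)
qed

lemma card_avoiding_triangulations_rotate:
  assumes "a < n"
  shows "card (avoiding_triangulations n K a) = card (avoiding_triangulations n K (Suc a mod n))"
proof (rule bij_betw_same_card[of "(`) ((`) (rotate_vertex n))"],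
    rule bij_betw_byWitness[where f' = "(`) ((`) (unrotate_vertex n))"])
  show "\<forall>T\<in>avoiding_triangulations n K a. (`) (unrotate_vertex n) ` (`) (rotate_vertex n) ` T = T"
    using unrotate_rotate_triangulation unfolding avoiding_triangulations_def by blast
  show "\<forall>T\<in>avoiding_triangulations n K (Suc a mod n). (`) (rotate_vertex n) ` (`) (unrotate_vertex n) ` T = T"
    using rotate_unrotate_triangulation unfolding avoiding_triangulations_def by blast
  show "(`) ((`) (rotate_vertex n)) ` avoiding_triangulations n K a \<subseteq> avoiding_triangulations n K (Suc a mod n)"
    using rotate_avoiding_triangulations[OF assms] by blast
  show "(`) ((`) (unrotate_vertex n)) ` avoiding_triangulations n K (Suc a mod n) \<subseteq> avoiding_triangulations n K a"
    using unrotate_avoiding_triangulations[OF assms] by blast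
qed

lemma card_avoiding_triangulations_last:
  assumes "a < n"
  shows "card (avoiding_triangulations n K a) = card (avoiding_triangulations n K (n - 1))"
proof -
  have "a \<le> n - 1" using assms by simp
  then show ?thesis
  proof (induction rule: inc_induct)
    case (step a)
    then have "Suc a mod n = Suc a" by simp
    then show ?case using card_avoiding_triangulations_rotate[of a n K] step by simp
  qed simp
qed

lemma avoiding_triangulations_last_vertex:
  assumes "m + 3 \<le> n"
  shows "avoiding_triangulations n {2..m + 1} (n - 1)
       = {T. interval_triangulation 0 (n - 1) T \<and> (\<forall>j\<in>{0<..m}. {j, n - 1} \<notin> T)}"
proof -
  have wrap: "(n - 1 + k) mod n = k - 1" if "k \<in> {2..m + 1}" for k
  proof -
    have "(n - 1 + k) mod n = ((k - 1) + n) mod n"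
      by (rule arg_cong[where f = "\<lambda>x. x mod n"]) (use that assms in auto)
    also have "\<dots> = (k - 1) mod n" by (rule mod_add_self2)
    also have "\<dots> = k - 1" using that assms by (intro mod_less) auto
    finally show ?thesis .
  qed
  have "(\<forall>k\<in>{2..m + 1}. {n - 1, (n - 1 + k) mod n} \<notin> T) \<longleftrightarrow> (\<forall>j\<in>{0<..m}. {j, n - 1} \<notin> T)" for T
  proof
    assume avoid: "\<forall>k\<in>{2..m + 1}. {n - 1, (n - 1 + k) mod n} \<notin> T"
    show "\<forall>j\<in>{0<..m}. {j, n - 1} \<notin> T"
    proof
      fix j assume "j \<in> {0<..m}"
      then have "Suc j \<in> {2..m + 1}" by auto
      then show "{j, n - 1} \<notin> T" using avoid wrap by (metis diff_Suc_1 insert_commute)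
    qed
  next
    assume avoid: "\<forall>j\<in>{0<..m}. {j, n - 1} \<notin> T"
    show "\<forall>k\<in>{2..m + 1}. {n - 1, (n - 1 + k) mod n} \<notin> T"
    proof
      fix k assume k: "k \<in> {2..m + 1}"
      then have "k - 1 \<in> {0<..m}" by auto
      then show "{n - 1, (n - 1 + k) mod n} \<notin> T" using avoid wrap[OF k] by (simp add: insert_commute)
    qed
  qed
  then show ?thesis
    using assms unfolding avoiding_triangulations_def
    by (simp add: triangulation_iff_interval_triangulation)
qed

theorem lemma3p4:
  fixes n a m :: nat
  assumes "n \<ge> 4" and "a < n" and "m \<le> n - 3"
  shows "card {T. triangulation n T \<and> (\<forall>k\<in>{2..m+1}. {a, (a + k) mod n} \<notin> T)}
         = (\<Sum>i = 0..n - 3 - m. catalan i * catalan (n - 3 - i))"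
proof -
  have "card {T. triangulation n T \<and> (\<forall>k\<in>{2..m+1}. {a, (a + k) mod n} \<notin> T)}
      = card (avoiding_triangulations n {2..m + 1} (n - 1))"
    using card_avoiding_triangulations_last[OF assms(2)] unfolding avoiding_triangulations_def .
  also have "\<dots> = card {T. interval_triangulation 0 (n - 1) T \<and> (\<forall>j\<in>{0<..0 + m}. {j, n - 1} \<notin> T)}"
    using assms avoiding_triangulations_last_vertex[of m n] by simp
  also have "\<dots> = (\<Sum>c\<in>{0 + m<..<n - 1}. catalan (c - 0 - 1) * catalan (n - 1 - c - 1))"
    using assms by (intro card_avoiding_fan) auto
  also have "\<dots> = (\<Sum>i = 0..n - 3 - m. catalan i * catalan (n - 3 - i))"
    by (rule sum.reindex_bij_witness[of _ "\<lambda>i. n - 2 - i" "\<lambda>c. n - 2 - c"])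
      (use assms in \<open>auto simp: mult.commute\<close>)
  finally show ?thesis .
qed

end
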